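(* In the social learning model (for any signal distributions satisfying the standing assumptions), there exist $c>0$ and $0<\gamma<1$ such that for all $n>0$, $$\mathbb{P}(\Xi\ge n)\le c\,\gamma^n.$$
   Context: Social learning model. A state $\theta\in\{-1,+1\}$ is drawn with $\mathbb{P}(\theta=+1)=\mathbb{P}(\theta=-1)=1/2$. Agents $t=1,2,\dots$ receive private signals $s_t\in\mathbb{R}$ that are i.i.d. conditionally on $\theta$, with CDF $F_+$ if $\theta=+1$ and $F_-$ if $\theta=-1$; $F_+$ and $F_-$ are mutually absolutely continuous. Let $L_t=\log\frac{\mathbb{P}(\theta=+1\mid s_t)}{\mathbb{P}(\theta=-1\mid s_t)}$ be the private log-likelihood ratio, and let $G_+$, $G_-$ denote the CDFs of $L_t$ conditional on $\theta=+1$, $\theta=-1$ respectively. Signals are assumed unbounded: for every $M\in\mathbb{R}$, $\mathbb{P}(L_t>M)>0$ and $\mathbb{P}(L_t<-M)>0$. Agent $t$ observes $a_1,\dots,a_{t-1}$ and her own signal and chooses $a_t\in\{-1,+1\}$ (utility $1$ if $a_t=\theta$, else $0$). The public belief is $\mu_t=\mathbb{P}(\theta=+1\mid a_1,\dots,a_{t-1})$ and $\ell_t=\log\frac{\mu_t}{1-\mu_t}$ (so $\ell_1=0$). In equilibrium $a_t=+1$ iff $\ell_t+L_t>0$, and otherwise $a_t=-1$. Consequently $\ell_{t+1}=\ell_t+D_+(\ell_t)$ if $a_t=+1$ and $\ell_{t+1}=\ell_t+D_-(\ell_t)$ if $a_t=-1$, where $D_+(x)=\log\frac{1-G_+(-x)}{1-G_-(-x)}$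 and $D_-(x)=\log\frac{G_+(-x)}{G_-(-x)}$. We write $\mathbb{P}_+(\cdot)=\mathbb{P}(\cdot\mid\theta=+1)$ and $\mathbb{E}_+$ for the corresponding expectation. There is an upset at time $t\ge2$ if $a_{t-1}\ne a_t$. $\Xi=|\{t\ge 2: a_{t-1}\ne a_t\}|$ is the total number of upsets. *)

theory Defs
  imports "HOL-Probability.Probability"
begin

text \<open>Private log-likelihood ratio of a signal x: with a uniform prior,
  log (P(theta=+1|s)/P(theta=-1|s)) = log (dF_+/dF_-)(x).\<close>
definition llr :: "real measure \<Rightarrow> real measure \<Rightarrow> real \<Rightarrow> real" where
  "llr Fp Fm x = ln (enn2real (RN_deriv Fm Fp x))"

definition Gcdf :: "real measure \<Rightarrow> real measure \<Rightarrow> real measure \<Rightarrow> real \<Rightarrow> real" where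
  "Gcdf Fp Fm F x = measure F {y \<in> space F. llr Fp Fm y \<le> x}"

definition Dplus :: "real measure \<Rightarrow> real measure \<Rightarrow> real \<Rightarrow> real" where
  "Dplus Fp Fm x = ln ((1 - Gcdf Fp Fm Fp (- x)) / (1 - Gcdf Fp Fm Fm (- x)))"

definition Dminus :: "real measure \<Rightarrow> real measure \<Rightarrow> real \<Rightarrow> real" where
  "Dminus Fp Fm x = ln (Gcdf Fp Fm Fp (- x) / Gcdf Fp Fm Fm (- x))"

text \<open>Agents are indexed 0,1,2,... (agent t+1 of the paper is index t).
  Ls t is the private log-likelihood ratio of agent t.
  pub_llr gives the public log-likelihood ratio ell_t (ell of the first agent is 0).\<close>
fun pub_llr :: "(real \<Rightarrow> real) \<Rightarrow> (real \<Rightarrow> real) \<Rightarrow> (nat \<Rightarrow> real) \<Rightarrow> nat \<Rightarrow> real" where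
  "pub_llr Dp Dm Ls 0 = 0"
| "pub_llr Dp Dm Ls (Suc t) =
     (let l = pub_llr Dp Dm Ls t in if l + Ls t > 0 then l + Dp l else l + Dm l)"

definition action :: "(real \<Rightarrow> real) \<Rightarrow> (real \<Rightarrow> real) \<Rightarrow> (nat \<Rightarrow> real) \<Rightarrow> nat \<Rightarrow> int" where
  "action Dp Dm Ls t = (if pub_llr Dp Dm Ls t + Ls t > 0 then 1 else -1)"

definition upsets :: "(real \<Rightarrow> real) \<Rightarrow> (real \<Rightarrow> real) \<Rightarrow> (nat \<Rightarrow> real) \<Rightarrow> enat" where
  "upsets Dp Dm Ls =
     (let S = {t. action Dp Dm Ls t \<noteq> action Dp Dm Ls (Suc t)} in
      if finite S then enat (card S) else \<infinity>)"

end

theory Submission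
  imports Defs
begin

text \<open>Encode a history of actions as a boolean list h. Its probability is (W+(h) + W-(h))/2,
  where W+(h) and W-(h) are the probabilities of the successive choices along h in state +1 and -1;
  they satisfy W+(h) = exp x * W-(h) for the public log-likelihood ratio x reached after h. Right after
  a switch to +1 we have x >= 0, so state +1 carries at least half of the mass of h. In state +1 an
  agent at public belief x >= 0 deviates with probability Gp (-x), which by unboundedness of the
  signals is at most B exp (-x) times the gap Gm (-x) - Gp (-x) that pushes x upwards when she does
  not deviate. So the deviation hazards along the herd telescope, and the herd never breaks with
  probability at least exp (-B): after every upset, a further upset has conditional probability at
  most gamma = 1 - exp (-B) / 4. A potential on finite histories that grows by the factor 1 / gamma
  at every upset, and whose total over the histories of a given length does not increase with the
  length, turns this into P(Xi >= n) <= 2 gamma^n.\<close>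

section \<open>Elementary estimates\<close>

lemma ln_one_minus_ge:
  fixes g :: real
  assumes "0 \<le> g" "g < 1"
  shows "- (g / (1 - g)) \<le> ln (1 - g)"
proof -
  have "ln (1 / (1 - g)) \<le> 1 / (1 - g) - 1" by (rule ln_le_minus_one) (use assms in simp)
  moreover have "ln (1 / (1 - g)) = - ln (1 - g)" using assms by (simp add: ln_div)
  moreover have "1 / (1 - g) - 1 = g / (1 - g)" using assms by (simp add: field_simps)
  ultimately show ?thesis by linarith
qed

fun drift_survival :: "(real \<Rightarrow> real) \<Rightarrow> (real \<Rightarrow> real) \<Rightarrow> real \<Rightarrow> nat \<Rightarrow> real" where
  "drift_survival h1 h2 z 0 = 1"
| "drift_survival h1 h2 z (Suc r) =
     (1 - h1 z) * drift_survival h1 h2 (z + ln ((1 - h1 z) / (1 - h2 z))) r"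

text \<open>The step from z to z' decreases B exp (-z) by at least h1 z / (1 - h1 z) \<ge> - ln (1 - h1 z),
  so the logarithm of the product is bounded below by a telescoping sum.\<close>
lemma drift_survival_lower:
  assumes B: "B > 0"
    and h: "\<And>z. z \<ge> 0 \<Longrightarrow>
              0 \<le> h1 z \<and> h1 z < 1 \<and> h2 z < 1 \<and> h1 z \<le> B * exp (- z) * (h2 z - h1 z)"
    and z: "z \<ge> 0"
  shows "exp (- B * exp (- z)) \<le> drift_survival h1 h2 z r"
  using z
proof (induction r arbitrary: z)
  case 0
  then show ?case using B by simp
next
  case (Suc r)
  define g where "g = h1 z"
  define g2 where "g2 = h2 z"
  have g: "0 \<le> g" "g < 1" "g2 < 1" "g \<le> B * exp (- z) * (g2 - g)"
    using h[OF Suc.prems] by (auto simp: g_def g2_def)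
  have "0 < B * exp (- z)" using B by simp
  then have "g \<le> g2" using g by (smt (verit) zero_le_mult_iff)
  define z' where "z' = z + ln ((1 - g) / (1 - g2))"
  have "1 \<le> (1 - g) / (1 - g2)" using g \<open>g \<le> g2\<close> by simp
  then have z': "z \<le> z'" by (simp add: z'_def)
  have ez': "exp (- z') = exp (- z) * (1 - g2) / (1 - g)"
    using g \<open>g \<le> g2\<close> by (simp add: z'_def exp_diff exp_minus field_simps)
  have "g / (1 - g) \<le> B * exp (- z) * (g2 - g) / (1 - g)"
    using g by (intro divide_right_mono) auto
  also have "\<dots> = B * exp (- z) - B * exp (- z')"
    using g by (simp add: ez' field_simps)
  finally have "- (B * exp (- z) - B * exp (- z')) \<le> ln (1 - g)"
    using ln_one_minus_ge[OF g(1,2)] by linarith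
  then have decay: "exp (- (B * exp (- z) - B * exp (- z'))) \<le> 1 - g"
    using g by (metis exp_le_cancel_iff exp_ln diff_gt_0_iff_gt)
  have "exp (- B * exp (- z))
      = exp (- (B * exp (- z) - B * exp (- z'))) * exp (- B * exp (- z'))"
    by (simp add: exp_add[symmetric])
  also have "\<dots> \<le> (1 - g) * exp (- B * exp (- z'))"
    using decay by (intro mult_right_mono) auto
  also have "\<dots> \<le> (1 - g) * drift_survival h1 h2 z' r"
    using Suc.IH[of z'] Suc.prems z' g by (intro mult_left_mono) auto
  finally show ?case by (simp add: g_def g2_def z'_def)
qed

lemma le_scaled_gap:
  fixes z a b c :: real
  assumes z: "0 \<le> z" and c: "0 < c" and a: "0 \<le> a" "a \<le> 1"
    and near: "z \<le> 1 \<Longrightarrow> a \<le> b - c" and far: "1 \<le> z \<Longrightarrow> a \<le> exp (- z) * b"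
  shows "a \<le> (2 + 3 / c) * exp (- z) * (b - a)"
proof (cases "z \<le> 1")
  case True
  have d: "c \<le> b - a" using near[OF True] by linarith
  have "exp 1 \<le> (3::real)" by (rule exp_le)
  then have "1 / 3 \<le> exp (-1::real)" by (simp add: exp_minus field_simps)
  also have "\<dots> \<le> exp (- z)" using True by simp
  finally have e: "1 / 3 \<le> exp (- z)" .
  have "1 \<le> (3 / c) * (1/3) * c" using c by simp
  also have "\<dots> \<le> (3 / c) * exp (- z) * (b - a)"
    using c e d by (intro mult_mono) auto
  also have "\<dots> \<le> (2 + 3 / c) * exp (- z) * (b - a)"
    using c d by (intro mult_right_mono) auto
  finally show ?thesis using a by linarith
next
  case False
  have h: "a \<le> exp (- z) * b" using False by (intro far) simp
  have "2 \<le> exp (1::real)" using exp_ge_add_one_self[of 1] by simp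
  then have "exp (-1::real) \<le> 1/2" by (simp add: exp_minus field_simps)
  moreover have "exp (- z) \<le> exp (- 1)" using False by simp
  ultimately have e: "exp (- z) \<le> 1/2" by linarith
  have "0 \<le> exp (- z) * b" using h a by linarith
  then have b: "0 \<le> b" by (simp add: zero_le_mult_iff)
  have "exp (- z) * b \<le> 1 / 2 * b" using e b by (rule mult_right_mono)
  then have "a \<le> b / 2" using h by simp
  then have d: "b / 2 \<le> b - a" by linarith
  have "a \<le> 2 * exp (- z) * (b / 2)" using h by simp
  also have "\<dots> \<le> 2 * exp (- z) * (b - a)" using d by (intro mult_left_mono) auto
  also have "\<dots> \<le> (2 + 3 / c) * exp (- z) * (b - a)"
    using c d b by (intro mult_right_mono) auto
  finally show ?thesis .
qed

lemma mixture_lower: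
  fixes u v su sv p :: real
  assumes "0 \<le> u" "u \<le> v" "0 \<le> p" "p \<le> sv" "0 \<le> su"
  shows "p / 2 * (u + v) \<le> v * sv + u * su"
proof -
  have "0 \<le> v" using assms by linarith
  have "p / 2 * (u + v) \<le> p * v" using assms by (simp add: field_simps mult_left_mono)
  also have "\<dots> \<le> v * sv" using assms \<open>0 \<le> v\<close> by (simp add: mult.commute mult_right_mono)
  finally show ?thesis using assms by (smt (verit) mult_nonneg_nonneg)
qed

section \<open>Histories\<close>

fun llr_path :: "(real \<Rightarrow> bool \<Rightarrow> real) \<Rightarrow> bool list \<Rightarrow> nat \<Rightarrow> real" where
  "llr_path st h 0 = 0"
| "llr_path st h (Suc i) = st (llr_path st h i) (h ! i)"

definition path_weight :: "(real \<Rightarrow> bool \<Rightarrow> real) \<Rightarrow> (real \<Rightarrow> bool \<Rightarrow> real) \<Rightarrow> bool list \<Rightarrow> real"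
  where "path_weight q st h = (\<Prod>i<length h. q (llr_path st h i) (h ! i))"

fun stay_prob :: "(real \<Rightarrow> bool \<Rightarrow> real) \<Rightarrow> (real \<Rightarrow> bool \<Rightarrow> real) \<Rightarrow> real \<Rightarrow> bool \<Rightarrow> nat \<Rightarrow> real"
  where
  "stay_prob q st x b 0 = 1"
| "stay_prob q st x b (Suc r) = q x b * stay_prob q st (st x b) b r"

definition switches :: "bool list \<Rightarrow> nat" where
  "switches h = card {i. Suc i < length h \<and> h ! i \<noteq> h ! Suc i}"

lemma llr_path_append [simp]: "i \<le> length h \<Longrightarrow> llr_path st (h @ [b]) i = llr_path st h i"
  by (induction i) (auto simp: nth_append)

lemma path_weight_Nil [simp]: "path_weight q st [] = 1"
  by (simp add: path_weight_def)

lemma path_weight_append: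
  "path_weight q st (h @ [b]) = path_weight q st h * q (llr_path st h (length h)) b"
proof -
  have "(\<Prod>i<length h. q (llr_path st (h @ [b]) i) ((h @ [b]) ! i)) = path_weight q st h"
    unfolding path_weight_def by (rule prod.cong) (auto simp: nth_append)
  then show ?thesis
    by (simp add: path_weight_def)
qed

lemma path_weight_nonneg: "(\<And>x b. 0 \<le> q x b) \<Longrightarrow> 0 \<le> path_weight q st h"
  unfolding path_weight_def by (rule prod_nonneg) auto

lemma stay_prob_nonneg: "(\<And>x b. 0 \<le> q x b) \<Longrightarrow> 0 \<le> stay_prob q st x b r"
  by (induction r arbitrary: x) auto

lemma switches_singleton [simp]: "switches [b] = 0"
  by (simp add: switches_def)

lemma switches_append:
  assumes "h \<noteq> []"
  shows "switches (h @ [b]) = switches h + (if last h \<noteq> b then 1 else 0)"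
proof -
  define m where "m = length h - 1"
  have m: "length h = Suc m" using assms by (cases h) (auto simp: m_def)
  define S where "S = {i. Suc i < length h \<and> h ! i \<noteq> h ! Suc i}"
  have "finite S" unfolding S_def by (rule finite_subset[of _ "{..<length h}"]) auto
  moreover have "m \<notin> S" using m by (auto simp: S_def)
  moreover have "{i. Suc i < length (h @ [b]) \<and> (h @ [b]) ! i \<noteq> (h @ [b]) ! Suc i}
      = S \<union> (if last h \<noteq> b then {m} else {})"
    using m assms by (auto simp: S_def nth_append last_conv_nth less_Suc_eq)
  ultimately show ?thesis unfolding switches_def S_def[symmetric] by auto
qed

lemma sum_lists_length_Suc:
  "(\<Sum>h\<in>{h :: bool list. length h = Suc m}. f h)
     = (\<Sum>h\<in>{h. length h = m}. f (h @ [True]) + f (h @ [False]))"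
proof -
  have img: "{h :: bool list. length h = Suc m} = (\<lambda>(h, b). h @ [b]) ` ({h. length h = m} \<times> UNIV)"
    by (auto simp: length_Suc_conv_rev image_def)
  have inj: "inj_on (\<lambda>(h, b). h @ [b]) ({h :: bool list. length h = m} \<times> UNIV)"
    by (auto simp: inj_on_def)
  have "(\<Sum>h\<in>{h :: bool list. length h = Suc m}. f h)
      = (\<Sum>(h, b)\<in>{h. length h = m} \<times> UNIV. f (h @ [b]))"
    unfolding img by (subst sum.reindex[OF inj]) (simp add: case_prod_unfold)
  also have "\<dots> = (\<Sum>h\<in>{h. length h = m}. \<Sum>b\<in>UNIV. f (h @ [b]))"
    by (simp add: sum.cartesian_product)
  finally show ?thesis by (simp add: UNIV_bool add.commute)
qed

lemma enat_le_card_iff: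
  fixes S :: "nat set"
  shows "enat n \<le> (if finite S then enat (card S) else \<infinity>) \<longleftrightarrow> (\<exists>T. n \<le> card {i. i < T \<and> i \<in> S})"
proof (cases "finite S")
  case True
  then obtain k where k: "S \<subseteq> {..<k}" using finite_nat_iff_bounded by blast
  have "{i. i < k \<and> i \<in> S} = S" using k by auto
  moreover have "\<And>T. card {i. i < T \<and> i \<in> S} \<le> card S"
    using True by (intro card_mono) auto
  ultimately show ?thesis using True by (auto intro: le_trans exI[of _ k])
next
  case False
  then obtain B where B: "finite B" "card B = n" "B \<subseteq> S" using infinite_arbitrarily_large by blast
  then obtain k where k: "B \<subseteq> {..<k}" using finite_nat_iff_bounded by blast
  have "card B \<le> card {i. i < k \<and> i \<in> S}"
    using B k by (intro card_mono) auto
  then show ?thesis using False B by auto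
qed

section \<open>Log-likelihood ratio of the signals\<close>

locale llr_signals =
  fixes Fp Fm :: "real measure"
  assumes Fp_prob: "prob_space Fp" and Fm_prob: "prob_space Fm"
    and Fp_sets: "sets Fp = sets borel" and Fm_sets: "sets Fm = sets borel"
    and ac1: "absolutely_continuous Fp Fm" and ac2: "absolutely_continuous Fm Fp"
    and unbounded: "\<And>K::real.
         (1/2) * measure Fp {x \<in> space Fp. llr Fp Fm x > K}
           + (1/2) * measure Fm {x \<in> space Fm. llr Fp Fm x > K} > 0
       \<and> (1/2) * measure Fp {x \<in> space Fp. llr Fp Fm x < - K}
           + (1/2) * measure Fm {x \<in> space Fm. llr Fp Fm x < - K} > 0"
begin

interpretation P: prob_space Fp by (rule Fp_prob)
interpretation N: prob_space Fm by (rule Fm_prob)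

abbreviation "L \<equiv> llr Fp Fm"
abbreviation "RN \<equiv> RN_deriv Fm Fp"
abbreviation "Gp \<equiv> Gcdf Fp Fm Fp"
abbreviation "Gm \<equiv> Gcdf Fp Fm Fm"

lemma space_Fp: "space Fp = UNIV"
  using sets_eq_imp_space_eq[OF Fp_sets] by simp

lemma space_Fm: "space Fm = UNIV"
  using sets_eq_imp_space_eq[OF Fm_sets] by simp

lemma borel_measurable_RN [measurable]: "RN \<in> borel_measurable borel"
  using borel_measurable_RN_deriv[of Fm Fp] measurable_cong_sets[OF Fm_sets refl] by blast

lemma borel_measurable_llr [measurable]: "L \<in> borel_measurable borel"
  unfolding llr_def[abs_def] by measurable

lemma density_RN: "density Fm RN = Fp"
  by (rule N.density_RN_deriv[OF ac2]) (simp add: Fp_sets Fm_sets)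

lemma emeasure_Fp_eq:
  "A \<in> sets borel \<Longrightarrow> emeasure Fp A = (\<integral>\<^sup>+x. RN x * indicator A x \<partial>Fm)"
  by (subst density_RN[symmetric], subst emeasure_density) (auto simp: Fm_sets)

lemma AE_RN_finite: "AE x in Fm. RN x \<noteq> \<infinity>"
  by (rule N.RN_deriv_finite[OF _ ac2])
    (auto simp: Fp_sets Fm_sets P.sigma_finite_measure_axioms)

lemma AE_RN_nonzero: "AE x in Fm. RN x \<noteq> 0"
proof -
  let ?Z = "{x. RN x = 0}"
  have Z: "?Z \<in> sets borel" by measurable
  have "emeasure Fp ?Z = (\<integral>\<^sup>+x. 0 \<partial>Fm)"
    unfolding emeasure_Fp_eq[OF Z] by (rule nn_integral_cong) (auto simp: indicator_def)
  then have "?Z \<in> null_sets Fp" using Z by (simp add: null_sets_def Fp_sets)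
  then have "?Z \<in> null_sets Fm"
    using ac1 unfolding absolutely_continuous_def by blast
  then show ?thesis using AE_not_in[of ?Z Fm] by auto
qed

lemma AE_RN_eq_exp_llr: "AE x in Fm. RN x = ennreal (exp (L x))"
  using AE_RN_finite AE_RN_nonzero
proof eventually_elim
  case (elim x)
  then obtain r where r: "RN x = ennreal r" "r \<ge> 0"
    using ennreal_cases[of "RN x"] by auto
  with elim have "r > 0" by auto
  then show ?case using r by (simp add: llr_def)
qed

lemma measure_Fp_le_exp_measure_Fm:
  assumes A: "A \<in> sets borel" and le: "\<And>x. x \<in> A \<Longrightarrow> L x \<le> y"
  shows "measure Fp A \<le> exp y * measure Fm A"
proof -
  have "emeasure Fp A \<le> (\<integral>\<^sup>+x. ennreal (exp y) * indicator A x \<partial>Fm)"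
    unfolding emeasure_Fp_eq[OF A] using AE_RN_eq_exp_llr
  proof (intro nn_integral_mono_AE, eventually_elim)
    case (elim x)
    show ?case using le[of x] by (cases "x \<in> A") (auto simp: elim)
  qed
  also have "\<dots> = ennreal (exp y) * emeasure Fm A"
    using A by (subst nn_integral_cmult_indicator) (auto simp: Fm_sets)
  finally have "ennreal (measure Fp A) \<le> ennreal (exp y * measure Fm A)"
    by (simp add: P.emeasure_eq_measure N.emeasure_eq_measure ennreal_mult)
  then show ?thesis by (subst (asm) ennreal_le_iff) auto
qed

lemma exp_measure_Fm_le_measure_Fp:
  assumes A: "A \<in> sets borel" and ge: "\<And>x. x \<in> A \<Longrightarrow> y \<le> L x"
  shows "exp y * measure Fm A \<le> measure Fp A"
proof -
  have "ennreal (exp y) * emeasure Fm A = (\<integral>\<^sup>+x. ennreal (exp y) * indicator A x \<partial>Fm)"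
    using A by (subst nn_integral_cmult_indicator) (auto simp: Fm_sets)
  also have "\<dots> \<le> emeasure Fp A"
    unfolding emeasure_Fp_eq[OF A] using AE_RN_eq_exp_llr
  proof (intro nn_integral_mono_AE, eventually_elim)
    case (elim x)
    show ?case using ge[of x] by (cases "x \<in> A") (auto simp: elim)
  qed
  finally have "ennreal (exp y * measure Fm A) \<le> ennreal (measure Fp A)"
    by (simp add: P.emeasure_eq_measure N.emeasure_eq_measure ennreal_mult)
  then show ?thesis by (subst (asm) ennreal_le_iff) auto
qed

lemma measure_Fp_eq_0_iff: "A \<in> sets borel \<Longrightarrow> measure Fp A = 0 \<longleftrightarrow> measure Fm A = 0"
  using ac1 ac2 unfolding absolutely_continuous_def
  by (auto simp: null_sets_def Fp_sets Fm_sets P.emeasure_eq_measure N.emeasure_eq_measure)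

lemma measure_llr_gt_pos: "0 < measure Fp {x. K < L x} \<and> 0 < measure Fm {x. K < L x}"
proof -
  have "{x. K < L x} \<in> sets borel" by measurable
  moreover have "0 < measure Fp {x. K < L x} \<or> 0 < measure Fm {x. K < L x}"
    using unbounded[of K] by (auto simp: space_Fp space_Fm)
  ultimately show ?thesis
    using measure_Fp_eq_0_iff measure_nonneg[of Fp] measure_nonneg[of Fm] by (metis less_eq_real_def)
qed

lemma measure_llr_lt_pos: "0 < measure Fp {x. L x < K} \<and> 0 < measure Fm {x. L x < K}"
proof -
  have "{x. L x < K} \<in> sets borel" by measurable
  moreover have "0 < measure Fp {x. L x < K} \<or> 0 < measure Fm {x. L x < K}"
    using unbounded[of "-K"] by (auto simp: space_Fp space_Fm)
  ultimately show ?thesis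
    using measure_Fp_eq_0_iff measure_nonneg[of Fp] measure_nonneg[of Fm] by (metis less_eq_real_def)
qed

lemma Gp_eq: "Gp y = measure Fp {x. L x \<le> y}"
  by (simp add: Gcdf_def space_Fp)

lemma Gm_eq: "Gm y = measure Fm {x. L x \<le> y}"
  by (simp add: Gcdf_def space_Fm)

lemma one_minus_Gp: "1 - Gp y = measure Fp {x. y < L x}"
  using P.prob_compl[of "{x. L x \<le> y}"] by (simp add: Gp_eq space_Fp Fp_sets set_diff_eq not_le)

lemma one_minus_Gm: "1 - Gm y = measure Fm {x. y < L x}"
  using N.prob_compl[of "{x. L x \<le> y}"] by (simp add: Gm_eq space_Fm Fm_sets set_diff_eq not_le)

lemma G_bounds: "0 < Gp y" "Gp y < 1" "0 < Gm y" "Gm y < 1"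
proof -
  have "measure Fp {x. L x < y} \<le> Gp y" "measure Fm {x. L x < y} \<le> Gm y"
    unfolding Gp_eq Gm_eq
    by (auto intro!: P.finite_measure_mono N.finite_measure_mono simp: Fp_sets Fm_sets)
  then show "0 < Gp y" "0 < Gm y" using measure_llr_lt_pos[of y] by linarith+
  show "Gp y < 1" "Gm y < 1"
    using one_minus_Gp[of y] one_minus_Gm[of y] measure_llr_gt_pos[of y] by linarith+
qed

text \<open>qp x b and qm x b: probability, in state +1 and -1 respectively, that an agent facing the
  public log-likelihood ratio x takes action b (True for +1).\<close>
definition "qp x b = (if b then 1 - Gp (-x) else Gp (-x))"
definition "qm x b = (if b then 1 - Gm (-x) else Gm (-x))"
definition "update x b = x + (if b then Dplus Fp Fm x else Dminus Fp Fm x)"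

lemma qp_pos: "0 < qp x b" and qm_pos: "0 < qm x b"
  using G_bounds by (auto simp: qp_def qm_def)

lemma qp_sum: "qp x True + qp x False = 1" and qm_sum: "qm x True + qm x False = 1"
  by (auto simp: qp_def qm_def)

lemma qp_eq_exp_qm: "qp x b = exp (update x b - x) * qm x b"
  using G_bounds[of "-x"] by (simp add: qp_def qm_def update_def Dplus_def Dminus_def)

lemma update_True_nonneg: "0 \<le> update x True"
proof -
  have "exp (-x) * (1 - Gm (-x)) \<le> 1 - Gp (-x)"
    unfolding one_minus_Gp one_minus_Gm by (rule exp_measure_Fm_le_measure_Fp) auto
  then have "exp (-x) \<le> (1 - Gp (-x)) / (1 - Gm (-x))"
    using G_bounds[of "-x"] by (simp add: pos_le_divide_eq)
  then have "-x \<le> ln ((1 - Gp (-x)) / (1 - Gm (-x)))"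
    using G_bounds[of "-x"] by (subst ln_ge_iff) auto
  then show ?thesis by (simp add: update_def Dplus_def)
qed

lemma update_False_nonpos: "update x False \<le> 0"
proof -
  have "Gp (-x) \<le> exp (-x) * Gm (-x)"
    unfolding Gp_eq Gm_eq by (rule measure_Fp_le_exp_measure_Fm) auto
  then have "Gp (-x) / Gm (-x) \<le> exp (-x)"
    using G_bounds[of "-x"] by (simp add: pos_divide_le_eq)
  then have "ln (Gp (-x) / Gm (-x)) \<le> ln (exp (-x))"
    using G_bounds[of "-x"] by (subst ln_le_cancel_iff) auto
  then show ?thesis by (simp add: update_def Dminus_def)
qed

definition "Bp = 2 + 3 / ((1 - exp (-1)) * Gm (-1))"
definition "Bm = 2 + 3 / ((1 - exp (-1)) * (1 - Gp 1))"

lemma Bp_pos: "0 < Bp" and Bm_pos: "0 < Bm"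
proof -
  have "0 < (1 - exp (-1)) * Gm (-1)" "0 < (1 - exp (-1)) * (1 - Gp 1)"
    using G_bounds[of "-1"] G_bounds[of 1] by auto
  then show "0 < Bp" "0 < Bm" unfolding Bp_def Bm_def by (auto intro!: add_pos_nonneg)
qed

text \<open>For z \<le> 1 the signals with L \<le> -1 alone make Gm (-z) exceed Gp (-z) by a fixed amount;
  for z \<ge> 1 the likelihood ratio bound does the job.\<close>
lemma deviation_bound_plus:
  assumes z: "0 \<le> z"
  shows "Gp (-z) \<le> Bp * exp (- z) * (Gm (-z) - Gp (-z))"
  unfolding Bp_def
proof (rule le_scaled_gap[OF z])
  show "0 < (1 - exp (-1)) * Gm (-1)" "0 \<le> Gp (-z)" "Gp (-z) \<le> 1"
    using G_bounds[of "-1"] G_bounds[of "-z"] by auto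
  show "Gp (- z) \<le> exp (- z) * Gm (- z)"
    unfolding Gp_eq Gm_eq by (rule measure_Fp_le_exp_measure_Fm) auto
next
  assume "z \<le> 1"
  define A1 where "A1 = {y. L y \<le> -1}"
  define A2 where "A2 = {y. -1 < L y \<and> L y \<le> -z}"
  have split: "{y. L y \<le> -z} = A1 \<union> A2" "A1 \<inter> A2 = {}"
    using \<open>z \<le> 1\<close> by (auto simp: A1_def A2_def)
  have sets: "A1 \<in> sets borel" "A2 \<in> sets borel" unfolding A1_def A2_def by measurable
  have "Gp (-z) = measure Fp A1 + measure Fp A2"
    unfolding Gp_eq split(1) by (rule P.finite_measure_Union) (use sets split in \<open>auto simp: Fp_sets\<close>)
  moreover have "Gm (-z) = measure Fm A1 + measure Fm A2"
    unfolding Gm_eq split(1) by (rule N.finite_measure_Union) (use sets split in \<open>auto simp: Fm_sets\<close>)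
  moreover have "Gm (-1) = measure Fm A1" by (simp add: Gm_eq A1_def)
  moreover have "measure Fp A1 \<le> exp (-1) * measure Fm A1"
    by (rule measure_Fp_le_exp_measure_Fm[OF sets(1)]) (auto simp: A1_def)
  moreover have "measure Fp A2 \<le> exp (-z) * measure Fm A2"
    by (rule measure_Fp_le_exp_measure_Fm[OF sets(2)]) (auto simp: A2_def)
  moreover have "exp (-z) * measure Fm A2 \<le> measure Fm A2"
    using z by (intro mult_left_le_one_le) auto
  ultimately show "Gp (- z) \<le> Gm (- z) - (1 - exp (-1)) * Gm (-1)"
    by (simp add: algebra_simps)
qed

lemma deviation_bound_minus:
  assumes z: "0 \<le> z"
  shows "1 - Gm z \<le> Bm * exp (- z) * ((1 - Gp z) - (1 - Gm z))"
  unfolding Bm_def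
proof (rule le_scaled_gap[OF z])
  show "0 < (1 - exp (-1)) * (1 - Gp 1)" "0 \<le> 1 - Gm z" "1 - Gm z \<le> 1"
    using G_bounds[of 1] G_bounds[of z] by auto
  have "exp z * (1 - Gm z) \<le> 1 - Gp z"
    unfolding one_minus_Gp one_minus_Gm by (rule exp_measure_Fm_le_measure_Fp) auto
  then show "1 - Gm z \<le> exp (- z) * (1 - Gp z)"
    by (simp add: exp_minus field_simps)
next
  assume "z \<le> 1"
  define A1 where "A1 = {y. 1 < L y}"
  define A2 where "A2 = {y. z < L y \<and> L y \<le> 1}"
  have split: "{y. z < L y} = A1 \<union> A2" "A1 \<inter> A2 = {}"
    using \<open>z \<le> 1\<close> by (auto simp: A1_def A2_def)
  have sets: "A1 \<in> sets borel" "A2 \<in> sets borel" unfolding A1_def A2_def by measurable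
  have "1 - Gp z = measure Fp A1 + measure Fp A2"
    unfolding one_minus_Gp split(1)
    by (rule P.finite_measure_Union) (use sets split in \<open>auto simp: Fp_sets\<close>)
  moreover have "1 - Gm z = measure Fm A1 + measure Fm A2"
    unfolding one_minus_Gm split(1)
    by (rule N.finite_measure_Union) (use sets split in \<open>auto simp: Fm_sets\<close>)
  moreover have "(1 - exp (-1)) * (1 - Gp 1) = measure Fp A1 - exp (-1) * measure Fp A1"
    by (simp add: one_minus_Gp A1_def algebra_simps)
  moreover have "measure Fm A1 \<le> exp (-1) * measure Fp A1"
    using exp_measure_Fm_le_measure_Fp[OF sets(1), of 1] by (auto simp: A1_def exp_minus field_simps)
  moreover have "exp z * measure Fm A2 \<le> measure Fp A2"
    by (rule exp_measure_Fm_le_measure_Fp[OF sets(2)]) (auto simp: A2_def)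
  moreover have "measure Fm A2 \<le> exp z * measure Fm A2"
    using z by (intro mult_le_cancel_right1[THEN iffD2]) auto
  ultimately show "1 - Gm z \<le> (1 - Gp z) - (1 - exp (-1)) * (1 - Gp 1)"
    by linarith
qed

lemma stay_prob_plus_eq:
  "stay_prob qp update x True r = drift_survival (\<lambda>z. Gp (-z)) (\<lambda>z. Gm (-z)) x r"
  by (induction r arbitrary: x) (auto simp: qp_def update_def Dplus_def)

lemma stay_prob_minus_eq:
  "stay_prob qm update x False r = drift_survival (\<lambda>z. 1 - Gm z) (\<lambda>z. 1 - Gp z) (-x) r"
proof (induction r arbitrary: x)
  case (Suc r)
  have "- update x False = - x + ln (Gm (-x) / Gp (-x))"
    using G_bounds[of "-x"] by (simp add: update_def Dminus_def ln_div)
  then show ?case using Suc by (simp add: qm_def)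
qed simp

lemma stay_prob_plus_lower:
  assumes "0 \<le> x"
  shows "exp (- Bp) \<le> stay_prob qp update x True r"
proof -
  have "exp (- Bp) \<le> exp (- Bp * exp (- x))"
    using assms Bp_pos by simp
  also have "\<dots> \<le> drift_survival (\<lambda>z. Gp (-z)) (\<lambda>z. Gm (-z)) x r"
    by (rule drift_survival_lower[OF Bp_pos _ assms])
      (simp add: G_bounds less_imp_le deviation_bound_plus)
  finally show ?thesis unfolding stay_prob_plus_eq .
qed

lemma stay_prob_minus_lower:
  assumes "x \<le> 0"
  shows "exp (- Bm) \<le> stay_prob qm update x False r"
proof -
  have "exp (- Bm) \<le> exp (- Bm * exp (- (-x)))"
    using assms Bm_pos by simp
  also have "\<dots> \<le> drift_survival (\<lambda>z. 1 - Gm z) (\<lambda>z. 1 - Gp z) (-x) r"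
    by (rule drift_survival_lower[OF Bm_pos])
      (use assms deviation_bound_minus G_bounds in \<open>auto simp: less_imp_le\<close>)
  finally show ?thesis unfolding stay_prob_minus_eq .
qed

abbreviation "Wp \<equiv> path_weight qp update"
abbreviation "Wm \<equiv> path_weight qm update"
abbreviation "llr_end h \<equiv> llr_path update h (length h)"

lemma Wp_nonneg: "0 \<le> Wp h" and Wm_nonneg: "0 \<le> Wm h"
  by (rule path_weight_nonneg, simp add: qp_pos qm_pos less_imp_le)+

lemma stay_prob_qp_nonneg: "0 \<le> stay_prob qp update x b r"
  and stay_prob_qm_nonneg: "0 \<le> stay_prob qm update x b r"
  by (rule stay_prob_nonneg, simp add: qp_pos qm_pos less_imp_le)+

lemma llr_end_append: "llr_end (h @ [b]) = update (llr_end h) b"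
  by simp

lemma Wp_eq_exp_Wm: "Wp h = exp (llr_end h) * Wm h"
proof (induction h rule: rev_induct)
  case (snoc b h)
  have "Wp (h @ [b]) = exp (llr_end h) * Wm h * (exp (update (llr_end h) b - llr_end h) * qm (llr_end h) b)"
    by (simp add: path_weight_append snoc.IH qp_eq_exp_qm[symmetric])
  also have "\<dots> = exp (llr_end (h @ [b])) * Wm (h @ [b])"
    by (simp add: path_weight_append llr_end_append exp_diff)
  finally show ?case .
qed simp

definition "stay_min = min (exp (- Bp)) (exp (- Bm))"
definition "decay = 1 - stay_min / 4"

lemma stay_min_pos: "0 < stay_min" and stay_min_le_1: "stay_min \<le> 1"
  using Bp_pos Bm_pos by (auto simp: stay_min_def min_def)

lemma decay_pos: "0 < decay" and decay_lt_1: "decay < 1"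
  using stay_min_pos stay_min_le_1 by (auto simp: decay_def)

text \<open>weight h is twice the probability of the history h, and stay_weight r h twice the
  probability that h is followed by r repetitions of its last action.\<close>
definition weight :: "bool list \<Rightarrow> real" where
  "weight h = Wp h + Wm h"

definition stay_weight :: "nat \<Rightarrow> bool list \<Rightarrow> real" where
  "stay_weight r h = Wp h * stay_prob qp update (llr_end h) (last h) r
     + Wm h * stay_prob qm update (llr_end h) (last h) r"

lemma weight_nonneg: "0 \<le> weight h"
  using Wp_nonneg Wm_nonneg by (simp add: weight_def)

lemma stay_weight_nonneg: "0 \<le> stay_weight r h"
  using Wp_nonneg Wm_nonneg stay_prob_qp_nonneg stay_prob_qm_nonneg by (simp add: stay_weight_def)

lemma stay_weight_0 [simp]: "stay_weight 0 h = weight h"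
  by (simp add: stay_weight_def weight_def)

lemma weight_append: "weight (h @ [True]) + weight (h @ [False]) = weight h"
  using qp_sum[of "llr_end h"] qm_sum[of "llr_end h"]
  by (simp add: weight_def path_weight_append algebra_simps flip: distrib_left)

lemma stay_weight_append_last:
  "h \<noteq> [] \<Longrightarrow> stay_weight r (h @ [last h]) = stay_weight (Suc r) h"
  by (simp add: stay_weight_def path_weight_append llr_end_append mult.assoc)

text \<open>Right after an action b the public belief points towards b, so the state matching b carries
  at least half of the weight, and it keeps the action b forever with probability at least
  stay_min.\<close>
lemma stay_weight_append_lower:
  "stay_min / 2 * weight (h @ [b]) \<le> stay_weight r (h @ [b])"
proof (cases b)
  case True
  have x: "0 \<le> llr_end (h @ [b])" using True update_True_nonneg by (simp add: llr_end_append)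
  have "stay_min / 2 * (Wm (h @ [b]) + Wp (h @ [b]))
      \<le> Wp (h @ [b]) * stay_prob qp update (llr_end (h @ [b])) b r
        + Wm (h @ [b]) * stay_prob qm update (llr_end (h @ [b])) b r"
  proof (rule mixture_lower)
    show "Wm (h @ [b]) \<le> Wp (h @ [b])"
      using Wp_eq_exp_Wm[of "h @ [b]"] Wm_nonneg[of "h @ [b]"] x
      by (simp add: mult_le_cancel_right1)
    show "stay_min \<le> stay_prob qp update (llr_end (h @ [b])) b r"
      using stay_prob_plus_lower[OF x, of r] True by (simp add: stay_min_def)
  qed (use Wm_nonneg stay_min_pos stay_prob_qm_nonneg in \<open>auto intro: less_imp_le\<close>)
  then show ?thesis by (simp add: weight_def stay_weight_def add.commute)
next
  case False
  have x: "llr_end (h @ [b]) \<le> 0" using False update_False_nonpos by (simp add: llr_end_append)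
  have "stay_min / 2 * (Wp (h @ [b]) + Wm (h @ [b]))
      \<le> Wm (h @ [b]) * stay_prob qm update (llr_end (h @ [b])) b r
        + Wp (h @ [b]) * stay_prob qp update (llr_end (h @ [b])) b r"
  proof (rule mixture_lower)
    show "Wp (h @ [b]) \<le> Wm (h @ [b])"
      using Wp_eq_exp_Wm[of "h @ [b]"] Wm_nonneg[of "h @ [b]"] x
      by (simp add: mult_le_cancel_right2)
    show "stay_min \<le> stay_prob qm update (llr_end (h @ [b])) b r"
      using stay_prob_minus_lower[OF x, of r] False by (simp add: stay_min_def)
  qed (use Wp_nonneg stay_min_pos stay_prob_qp_nonneg in \<open>auto intro: less_imp_le\<close>)
  then show ?thesis by (simp add: weight_def stay_weight_def add.commute)
qed

definition potential :: "nat \<Rightarrow> bool list \<Rightarrow> real" where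
  "potential T h = (1 / decay) ^ switches h * (2 * weight h - stay_weight (T - length h) h)"

text \<open>Repeating the last action leaves the bracket unchanged on the staying mass. A switch costs
  a factor 1 / decay, which is paid for because the switched history keeps at least the fraction
  stay_min / 2 of its weight in stay_weight, and 2 - stay_min / 2 = 2 * decay.\<close>
lemma potential_append_le:
  assumes h: "h \<noteq> []" and T: "length h < T"
  shows "potential T (h @ [True]) + potential T (h @ [False]) \<le> potential T h"
proof -
  define a where "a = last h"
  define g where "g = 1 / decay"
  define k where "k = switches h"
  define r where "r = T - Suc (length h)"
  have stay: "potential T (h @ [a]) = g ^ k * (2 * weight (h @ [a]) - stay_weight (Suc r) h)"
    using h by (simp add: potential_def switches_append stay_weight_append_last a_def g_def k_def r_def)
  have "potential T (h @ [\<not> a])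
      = g ^ Suc k * (2 * weight (h @ [\<not> a]) - stay_weight r (h @ [\<not> a]))"
    using h by (simp add: potential_def switches_append a_def g_def k_def r_def)
  also have "\<dots> \<le> g ^ Suc k * (2 * decay * weight (h @ [\<not> a]))"
    using stay_weight_append_lower[of h "\<not> a" r] decay_pos
    by (intro mult_left_mono) (auto simp: decay_def g_def algebra_simps)
  also have "\<dots> = g ^ k * (2 * weight (h @ [\<not> a]))"
    using decay_pos by (simp add: g_def)
  finally have switch: "potential T (h @ [\<not> a]) \<le> g ^ k * (2 * weight (h @ [\<not> a]))" .
  have "potential T h = g ^ k * (2 * weight h - stay_weight (Suc r) h)"
    using T by (simp add: potential_def a_def g_def k_def r_def Suc_diff_Suc)
  also have "\<dots> = g ^ k * (2 * weight (h @ [a]) - stay_weight (Suc r) h)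
                  + g ^ k * (2 * weight (h @ [\<not> a]))"
    by (subst weight_append[of h, symmetric], cases a) (simp_all add: algebra_simps)
  finally have "potential T (h @ [a]) + potential T (h @ [\<not> a]) \<le> potential T h"
    using stay switch by linarith
  then show ?thesis by (cases a) (simp_all add: add.commute)
qed

lemma sum_potential_mono:
  assumes "1 \<le> m" "m \<le> T"
  shows "(\<Sum>h\<in>{h. length h = T}. potential T h) \<le> (\<Sum>h\<in>{h. length h = m}. potential T h)"
  using assms(2,1)
proof (induction m rule: inc_induct)
  case (step n)
  have "(\<Sum>h\<in>{h. length h = Suc n}. potential T h)
      = (\<Sum>h\<in>{h. length h = n}. potential T (h @ [True]) + potential T (h @ [False]))"
    by (rule sum_lists_length_Suc)
  also have "\<dots> \<le> (\<Sum>h\<in>{h. length h = n}. potential T h)"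
    using step by (intro sum_mono potential_append_le) auto
  finally show ?case using step by simp
qed simp

lemma sum_potential_le:
  assumes "1 \<le> T"
  shows "(\<Sum>h\<in>{h. length h = T}. potential T h) \<le> 4"
proof -
  have singleton: "potential T [b] \<le> 2 * weight [b]" for b
    using stay_weight_nonneg[of "T - 1" "[b]"] by (simp add: potential_def)
  have "(\<Sum>h\<in>{h. length h = T}. potential T h) \<le> (\<Sum>h\<in>{h. length h = Suc 0}. potential T h)"
    using assms by (intro sum_potential_mono) auto
  also have "\<dots> = potential T [True] + potential T [False]"
    using sum_lists_length_Suc[where m=0 and f="potential T"] by simp
  also have "\<dots> \<le> 2 * (weight [True] + weight [False])"
    using singleton[of True] singleton[of False] by simp
  also have "\<dots> = 4"
    using weight_append[of "[]"] by (simp add: weight_def)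
  finally show ?thesis .
qed

lemma sum_weight_switches_ge:
  assumes "1 \<le> T"
  shows "(\<Sum>h\<in>{h. length h = T \<and> n \<le> switches h}. weight h / 2) \<le> 2 * decay ^ n"
proof -
  have potential_T: "potential T h = (1 / decay) ^ switches h * weight h" if "length h = T" for h
    using that by (simp add: potential_def)
  have "(\<Sum>h\<in>{h. length h = T \<and> n \<le> switches h}. weight h / 2)
      \<le> (\<Sum>h\<in>{h. length h = T \<and> n \<le> switches h}. decay ^ n / 2 * potential T h)"
  proof (rule sum_mono)
    fix h assume "h \<in> {h. length h = T \<and> n \<le> switches h}"
    then have h: "length h = T" "n \<le> switches h" by auto
    have "decay ^ n * (1 / decay) ^ switches h = (1 / decay) ^ (switches h - n)"
      using h decay_pos by (simp add: power_diff power_one_over field_simps)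
    also have "1 \<le> \<dots>" using decay_pos decay_lt_1 by (intro one_le_power) simp
    finally show "weight h / 2 \<le> decay ^ n / 2 * potential T h"
      using weight_nonneg[of h] potential_T[OF h(1)]
      by (simp add: mult_le_cancel_right1 mult.assoc[symmetric])
  qed
  also have "\<dots> \<le> (\<Sum>h\<in>{h. length h = T}. decay ^ n / 2 * potential T h)"
    using finite_lists_length_eq[of "UNIV :: bool set" T] potential_T decay_pos weight_nonneg
    by (intro sum_mono2) auto
  also have "\<dots> \<le> decay ^ n / 2 * 4"
    unfolding sum_distrib_left[symmetric]
    using sum_potential_le[OF assms] decay_pos by (intro mult_left_mono) auto
  finally show ?thesis by simp
qed

end

section \<open>The social learning model\<close>

locale social_learning = llr_signals Fp Fm for Fp Fm :: "real measure" +
  fixes M :: "'a measure" and theta :: "'a \<Rightarrow> int" and s :: "nat \<Rightarrow> 'a \<Rightarrow> real"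
  assumes M_prob: "prob_space M"
    and theta_meas: "theta \<in> measurable M (count_space UNIV)"
    and theta_vals: "\<And>\<omega>. \<omega> \<in> space M \<Longrightarrow> theta \<omega> \<in> {-1, 1}"
    and s_meas: "\<And>t. s t \<in> borel_measurable M"
    and law_plus: "\<And>(n::nat) (B :: nat \<Rightarrow> real set). (\<And>i. i < n \<Longrightarrow> B i \<in> sets borel) \<Longrightarrow>
        measure M {\<omega> \<in> space M. theta \<omega> = 1 \<and> (\<forall>i<n. s i \<omega> \<in> B i)}
          = (1/2) * (\<Prod>i<n. measure Fp (B i))"
    and law_minus: "\<And>(n::nat) (B :: nat \<Rightarrow> real set). (\<And>i. i < n \<Longrightarrow> B i \<in> sets borel) \<Longrightarrow>
        measure M {\<omega> \<in> space M. theta \<omega> = -1 \<and> (\<forall>i<n. s i \<omega> \<in> B i)}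
          = (1/2) * (\<Prod>i<n. measure Fm (B i))"
begin

interpretation M: prob_space M by (rule M_prob)

abbreviation "Xi \<omega> \<equiv> upsets (Dplus Fp Fm) (Dminus Fp Fm) (\<lambda>t. L (s t \<omega>))"
abbreviation "pub \<omega> t \<equiv> pub_llr (Dplus Fp Fm) (Dminus Fp Fm) (\<lambda>t. L (s t \<omega>)) t"

definition "act \<omega> t = (0 < pub \<omega> t + L (s t \<omega>))"
definition "hist \<omega> m = map (act \<omega>) [0..<m]"

definition "choice_set h i = {y. (0 < llr_path update h i + L y) = h ! i}"

lemma length_hist [simp]: "length (hist \<omega> m) = m"
  by (simp add: hist_def)

lemma hist_nth [simp]: "i < m \<Longrightarrow> hist \<omega> m ! i = act \<omega> i"
  by (simp add: hist_def del: upt_Suc)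

lemma pub_Suc: "pub \<omega> (Suc t) = update (pub \<omega> t) (act \<omega> t)"
  by (simp add: act_def update_def Let_def)

lemma pub_eq_llr_path: "(\<And>j. j < i \<Longrightarrow> act \<omega> j = h ! j) \<Longrightarrow> pub \<omega> i = llr_path update h i"
  by (induction i) (simp_all add: pub_Suc del: pub_llr.simps(2))

lemma acts_eq_iff_choice_sets:
  "(\<forall>i<m. act \<omega> i = h ! i) \<longleftrightarrow> (\<forall>i<m. s i \<omega> \<in> choice_set h i)"
proof (induction m)
  case (Suc m)
  have "act \<omega> m = h ! m \<longleftrightarrow> s m \<omega> \<in> choice_set h m" if "\<forall>i<m. act \<omega> i = h ! i"
    using pub_eq_llr_path[of m \<omega> h] that by (auto simp: act_def choice_set_def)
  then show ?case using Suc by (auto simp: less_Suc_eq)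
qed simp

lemma hist_eq_iff:
  "length h = m \<Longrightarrow> hist \<omega> m = h \<longleftrightarrow> (\<forall>i<m. s i \<omega> \<in> choice_set h i)"
  by (auto simp: list_eq_iff_nth_eq acts_eq_iff_choice_sets[symmetric])

lemma choice_set_borel [measurable]: "choice_set h i \<in> sets borel"
proof -
  have "{y \<in> space borel. (0 < llr_path update h i + L y) = h ! i} \<in> sets borel" by measurable
  then show ?thesis by (simp add: choice_set_def)
qed

lemma measure_Fp_choice_set: "measure Fp (choice_set h i) = qp (llr_path update h i) (h ! i)"
  and measure_Fm_choice_set: "measure Fm (choice_set h i) = qm (llr_path update h i) (h ! i)"
proof -
  have "choice_set h i = (if h ! i then {y. - llr_path update h i < L y}
                          else {y. L y \<le> - llr_path update h i})"
    by (auto simp: choice_set_def)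
  then show "measure Fp (choice_set h i) = qp (llr_path update h i) (h ! i)"
    "measure Fm (choice_set h i) = qm (llr_path update h i) (h ! i)"
    by (simp_all add: qp_def qm_def Gp_eq Gm_eq one_minus_Gp[symmetric] one_minus_Gm[symmetric])
qed

lemma hist_event_sets: "length h = m \<Longrightarrow> {\<omega> \<in> space M. hist \<omega> m = h} \<in> sets M"
  using s_meas[measurable] by (simp add: hist_eq_iff)

lemma measure_hist_event:
  assumes len: "length h = m"
  shows "measure M {\<omega> \<in> space M. hist \<omega> m = h} = weight h / 2"
proof -
  note [measurable] = theta_meas s_meas
  let ?E = "\<lambda>\<theta>. {\<omega> \<in> space M. theta \<omega> = \<theta> \<and> (\<forall>i<m. s i \<omega> \<in> choice_set h i)}"
  have "{\<omega> \<in> space M. hist \<omega> m = h} = ?E 1 \<union> ?E (-1)"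
    using theta_vals by (auto simp: hist_eq_iff[OF len])
  then have "measure M {\<omega> \<in> space M. hist \<omega> m = h} = measure M (?E 1) + measure M (?E (-1))"
    by (simp add: M.finite_measure_Union disjoint_iff)
  also have "\<dots> = (1/2) * (\<Prod>i<m. measure Fp (choice_set h i))
                  + (1/2) * (\<Prod>i<m. measure Fm (choice_set h i))"
    by (simp add: law_plus law_minus)
  also have "\<dots> = weight h / 2"
    using len by (simp add: weight_def path_weight_def measure_Fp_choice_set measure_Fm_choice_set)
  finally show ?thesis .
qed

lemma switches_hist: "switches (hist \<omega> (Suc T)) = card {i. i < T \<and> act \<omega> i \<noteq> act \<omega> (Suc i)}"
proof -
  have "{i. Suc i < length (hist \<omega> (Suc T)) \<and> hist \<omega> (Suc T) ! i \<noteq> hist \<omega> (Suc T) ! Suc i}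
      = {i. i < T \<and> act \<omega> i \<noteq> act \<omega> (Suc i)}"
    by auto
  then show ?thesis by (simp add: switches_def)
qed

lemma Xi_ge_iff: "enat n \<le> Xi \<omega> \<longleftrightarrow> (\<exists>T. n \<le> switches (hist \<omega> (Suc T)))"
proof -
  have "{t. action (Dplus Fp Fm) (Dminus Fp Fm) (\<lambda>t. L (s t \<omega>)) t
             \<noteq> action (Dplus Fp Fm) (Dminus Fp Fm) (\<lambda>t. L (s t \<omega>)) (Suc t)}
      = {t. act \<omega> t \<noteq> act \<omega> (Suc t)}"
    by (auto simp: action_def act_def simp del: pub_llr.simps)
  moreover have "switches (hist \<omega> (Suc T)) = card {i. i < T \<and> i \<in> {t. act \<omega> t \<noteq> act \<omega> (Suc t)}}"
    for T by (simp add: switches_hist)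
  ultimately show ?thesis
    unfolding upsets_def Let_def by (simp only:) (rule enat_le_card_iff)
qed

lemma switches_hist_ge_eq_UN:
  "{\<omega> \<in> space M. n \<le> switches (hist \<omega> m)}
     = (\<Union>h\<in>{h. length h = m \<and> n \<le> switches h}. {\<omega> \<in> space M. hist \<omega> m = h})"
  by auto

lemma switches_hist_ge_sets: "{\<omega> \<in> space M. n \<le> switches (hist \<omega> m)} \<in> sets M"
  unfolding switches_hist_ge_eq_UN
  using finite_lists_length_eq[of "UNIV :: bool set" m] hist_event_sets
  by (intro sets.finite_UN) (auto intro: finite_subset)

lemma measure_switches_hist_ge:
  "measure M {\<omega> \<in> space M. n \<le> switches (hist \<omega> (Suc T))} \<le> 2 * decay ^ n"
proof -
  let ?H = "{h. length h = Suc T \<and> n \<le> switches h}"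
  have "finite ?H"
    using finite_lists_length_eq[of "UNIV :: bool set" "Suc T"] by (auto intro: finite_subset)
  then have "measure M {\<omega> \<in> space M. n \<le> switches (hist \<omega> (Suc T))}
      = (\<Sum>h\<in>?H. measure M {\<omega> \<in> space M. hist \<omega> (Suc T) = h})"
    unfolding switches_hist_ge_eq_UN using hist_event_sets[where m="Suc T"]
    by (intro measure_finite_Union) (auto simp: disjoint_family_on_def M.emeasure_eq_measure)
  also have "\<dots> = (\<Sum>h\<in>?H. weight h / 2)"
    by (rule sum.cong) (auto simp: measure_hist_event)
  also have "\<dots> \<le> 2 * decay ^ n"
    by (rule sum_weight_switches_ge) simp
  finally show ?thesis .
qed

lemma Xi_ge_eq_UN: "{\<omega> \<in> space M. enat n \<le> Xi \<omega>} = (\<Union>T. {\<omega> \<in> space M. n \<le> switches (hist \<omega> (Suc T))})"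
  by (auto simp: Xi_ge_iff)

lemma Xi_ge_sets: "{\<omega> \<in> space M. enat n \<le> Xi \<omega>} \<in> sets M"
  unfolding Xi_ge_eq_UN using switches_hist_ge_sets by auto

lemma measure_Xi_ge: "measure M {\<omega> \<in> space M. enat n \<le> Xi \<omega>} \<le> 2 * decay ^ n"
proof -
  let ?A = "\<lambda>T. {\<omega> \<in> space M. n \<le> switches (hist \<omega> (Suc T))}"
  have "incseq ?A"
  proof (rule incseq_SucI)
    have "switches (hist \<omega> (Suc T)) \<le> switches (hist \<omega> (Suc (Suc T)))" for \<omega> T
      unfolding switches_hist by (rule card_mono) auto
    then show "?A T \<subseteq> ?A (Suc T)" for T using le_trans by blast
  qed
  then have "(\<lambda>T. measure M (?A T)) \<longlonglongrightarrow> measure M (\<Union>T. ?A T)"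
    using switches_hist_ge_sets by (intro M.finite_Lim_measure_incseq) auto
  then show ?thesis
    unfolding Xi_ge_eq_UN using measure_switches_hist_ge by (intro LIMSEQ_le_const2) auto
qed

end

theorem proposition1:
  fixes M :: "'a measure" and theta :: "'a \<Rightarrow> int" and s :: "nat \<Rightarrow> 'a \<Rightarrow> real"
    and Fp Fm :: "real measure"
  assumes Fp_prob: "prob_space Fp" and Fm_prob: "prob_space Fm"
    and Fp_sets: "sets Fp = sets borel" and Fm_sets: "sets Fm = sets borel"
    and ac1: "absolutely_continuous Fp Fm" and ac2: "absolutely_continuous Fm Fp"
    and unbounded: "\<And>K::real.
         (1/2) * measure Fp {x \<in> space Fp. llr Fp Fm x > K}
           + (1/2) * measure Fm {x \<in> space Fm. llr Fp Fm x > K} > 0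
       \<and> (1/2) * measure Fp {x \<in> space Fp. llr Fp Fm x < - K}
           + (1/2) * measure Fm {x \<in> space Fm. llr Fp Fm x < - K} > 0"
    and M_prob: "prob_space M"
    and theta_meas: "theta \<in> measurable M (count_space UNIV)"
    and theta_vals: "\<And>\<omega>. \<omega> \<in> space M \<Longrightarrow> theta \<omega> \<in> {-1, 1}"
    and s_meas: "\<And>t. s t \<in> borel_measurable M"
    and law_plus: "\<And>(n::nat) (B :: nat \<Rightarrow> real set). (\<And>i. i < n \<Longrightarrow> B i \<in> sets borel) \<Longrightarrow>
        measure M {\<omega> \<in> space M. theta \<omega> = 1 \<and> (\<forall>i<n. s i \<omega> \<in> B i)}
          = (1/2) * (\<Prod>i<n. measure Fp (B i))"
    and law_minus: "\<And>(n::nat) (B :: nat \<Rightarrow> real set). (\<And>i. i < n \<Longrightarrow> B i \<in> sets borel) \<Longrightarrow>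
        measure M {\<omega> \<in> space M. theta \<omega> = -1 \<and> (\<forall>i<n. s i \<omega> \<in> B i)}
          = (1/2) * (\<Prod>i<n. measure Fm (B i))"
  shows "(\<forall>n::nat. {\<omega> \<in> space M.
             upsets (Dplus Fp Fm) (Dminus Fp Fm) (\<lambda>t. llr Fp Fm (s t \<omega>)) \<ge> enat n} \<in> sets M)
    \<and> (\<exists>c::real. c > 0 \<and> (\<exists>\<gamma>::real. 0 < \<gamma> \<and> \<gamma> < 1 \<and>
        (\<forall>n::nat. n > 0 \<longrightarrow>
           measure M {\<omega> \<in> space M.
             upsets (Dplus Fp Fm) (Dminus Fp Fm) (\<lambda>t. llr Fp Fm (s t \<omega>)) \<ge> enat n}
           \<le> c * \<gamma> ^ n)))"
proof -
  interpret social_learning Fp Fm M theta s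
    by (intro social_learning.intro llr_signals.intro social_learning_axioms.intro) (fact assms)+
  show ?thesis
    using Xi_ge_sets measure_Xi_ge decay_pos decay_lt_1 by (intro conjI exI[of _ 2] exI[of _ decay]) auto
qed

end
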